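(* Let $S$ be a solid and let $x,y,z\in S$. If $e(x)(y+z)\ne e(x)y+e(x)z$, then $e(x)y=e(x)z$.
   Context: A solid is a set $S$ with two binary operations $+$ and $\cdot$ (written $xy$) and a binary relation $\le$ satisfying the following axioms (all variables range over $S$). (A1) $+$ is associative and commutative. (A2) For each $x$ there is $e$ with $x+e=x$ such that $e+f=e$ for every $f$ with $x+f=x$; this $e$ is unique and is denoted $e(x)$ (the magnitude of $x$). An element $x$ with $x=e(x)$ is called a magnitude. (A3) For each $x$ there is $s$ with $x+s=e(x)$ and $e(s)=e(x)$; it is unique and denoted $-x$; write $x-y$ for $x+(-y)$. (A4) $e(x+y)=e(x)$ or $e(x+y)=e(y)$. (M1) $\cdot$ is associative and commutative. (M2) For each $x\neq e(x)$ there is $u$ with $xu=x$ such that $uv=u$ for every $v$ with $xv=x$; it is unique and denoted $u(x)$. (M3) For each $x\ne e(x)$ there is $d$ with $xd=u(x)$ and $u(d)=u(x)$; it is unique and denoted $x^{-1}$; write $y/x$ for $yx^{-1}$. (M4) If $x\neq e(x)$ and $y\ne e(y)$ then $u(xy)=u(x)$ or $u(xy)=u(y)$. (O1) $\le$ is a total order (reflexive, antisymmetric, transitive, total); $x<y$ means $x\le y$ and $x\ne y$. (O2) $x\le y\Rightarrow x+z\le y+z$. (O3) $y+e(x)=e(x)\Rightarrow (y\le e(x)$ and $-y\le e(x))$. (O4) $(e(x)<x$ and $y\le z)\Rightarrow xy\le xz$. (O5) $e(y)\le y\le z\Rightarrow e(x)y\le e(x)z$. (AM1) For all $x,y$ there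 is $z$ with $e(x)y=e(z)$. (AM2) $e(xy)=e(x)y+e(y)x$. (AM3) If $x\ne e(x)$ then $e(u(x))=e(x)/x$. (AM4) (distributivity axiom) $xy+xz=x(y+z)+e(x)y+e(x)z$. (AM5) $-(xy)=(-x)y$. (E1) There is $m$ with $m+x=x$ for all $x$; it is unique, called zero and denoted $0$. (E2) There is $u$ with $ux=x$ for all $x$; it is unique, called one and denoted $1$. (E3) There is $M$ with $e(x)+M=M$ for all $x$. (E4) There is $x$ with $e(x)\ne 0$ and $e(x)\ne M$. (E5) For every $x$ there is $a$ with $x=a+e(x)$ and $e(a)=0$. (E6) If $x,y$ are magnitudes with $x<y$, there is $z$ with $z\ne e(z)$ and $x<z<y$. Further notation: $S^*=\{x\in S: x\ne e(x)\}$ (zeroless elements). $x$ is positive if $e(x)\le x$ and negative if $x<e(x)$; $|x|=x$ if $x$ is positive and $|x|=-x$ if $x$ is negative. $x$ is precise if $e(x)=0$. The relative uncertainty $R(x)$ is $e(u(x))$ if $x\ne e(x)$, and $M$ (from (E3)) if $x=e(x)$. *)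

theory Defs
  imports Main
begin

definition mag :: "('a \<Rightarrow> 'a \<Rightarrow> 'a) \<Rightarrow> 'a \<Rightarrow> 'a" where
  "mag pl x = (THE e. pl x e = x \<and> (\<forall>f. pl x f = x \<longrightarrow> pl e f = e))"

definition sneg :: "('a \<Rightarrow> 'a \<Rightarrow> 'a) \<Rightarrow> 'a \<Rightarrow> 'a" where
  "sneg pl x = (THE s. pl x s = mag pl x \<and> mag pl s = mag pl x)"

definition sunit :: "('a \<Rightarrow> 'a \<Rightarrow> 'a) \<Rightarrow> 'a \<Rightarrow> 'a" where
  "sunit ml x = (THE u. ml x u = x \<and> (\<forall>v. ml x v = x \<longrightarrow> ml u v = u))"

definition sinv :: "('a \<Rightarrow> 'a \<Rightarrow> 'a) \<Rightarrow> ('a \<Rightarrow> 'a \<Rightarrow> 'a) \<Rightarrow> 'a \<Rightarrow> 'a" where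
  "sinv pl ml x = (THE d. d \<noteq> mag pl d \<and> ml x d = sunit ml x \<and> sunit ml d = sunit ml x)"

definition szero :: "('a \<Rightarrow> 'a \<Rightarrow> 'a) \<Rightarrow> 'a" where
  "szero pl = (THE m. \<forall>x. pl m x = x)"

definition sbig :: "('a \<Rightarrow> 'a \<Rightarrow> 'a) \<Rightarrow> 'a" where
  "sbig pl = (THE M. \<forall>x. pl (mag pl x) M = M)"

definition solid :: "('a \<Rightarrow> 'a \<Rightarrow> 'a) \<Rightarrow> ('a \<Rightarrow> 'a \<Rightarrow> 'a) \<Rightarrow> ('a \<Rightarrow> 'a \<Rightarrow> bool) \<Rightarrow> bool" where
  "solid pl ml le \<longleftrightarrow>
    \<comment> \<open>A1\<close>
    (\<forall>x y z. pl (pl x y) z = pl x (pl y z)) \<and> (\<forall>x y. pl x y = pl y x) \<and>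
    \<comment> \<open>A2\<close>
    (\<forall>x. \<exists>!e. pl x e = x \<and> (\<forall>f. pl x f = x \<longrightarrow> pl e f = e)) \<and>
    \<comment> \<open>A3\<close>
    (\<forall>x. \<exists>!s. pl x s = mag pl x \<and> mag pl s = mag pl x) \<and>
    \<comment> \<open>A4\<close>
    (\<forall>x y. mag pl (pl x y) = mag pl x \<or> mag pl (pl x y) = mag pl y) \<and>
    \<comment> \<open>M1\<close>
    (\<forall>x y z. ml (ml x y) z = ml x (ml y z)) \<and> (\<forall>x y. ml x y = ml y x) \<and>
    \<comment> \<open>M2\<close>
    (\<forall>x. x \<noteq> mag pl x \<longrightarrow> (\<exists>!u. ml x u = x \<and> (\<forall>v. ml x v = x \<longrightarrow> ml u v = u))) \<and>
    \<comment> \<open>M3\<close>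
    (\<forall>x. x \<noteq> mag pl x \<longrightarrow>
       (\<exists>!d. d \<noteq> mag pl d \<and> ml x d = sunit ml x \<and> sunit ml d = sunit ml x)) \<and>
    \<comment> \<open>M4\<close>
    (\<forall>x y. x \<noteq> mag pl x \<longrightarrow> y \<noteq> mag pl y \<longrightarrow>
       sunit ml (ml x y) = sunit ml x \<or> sunit ml (ml x y) = sunit ml y) \<and>
    \<comment> \<open>O1\<close>
    (\<forall>x. le x x) \<and> (\<forall>x y. le x y \<longrightarrow> le y x \<longrightarrow> x = y) \<and>
    (\<forall>x y z. le x y \<longrightarrow> le y z \<longrightarrow> le x z) \<and> (\<forall>x y. le x y \<or> le y x) \<and>
    \<comment> \<open>O2\<close>
    (\<forall>x y z. le x y \<longrightarrow> le (pl x z) (pl y z)) \<and>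
    \<comment> \<open>O3\<close>
    (\<forall>x y. pl y (mag pl x) = mag pl x \<longrightarrow> le y (mag pl x) \<and> le (sneg pl y) (mag pl x)) \<and>
    \<comment> \<open>O4\<close>
    (\<forall>x y z. (le (mag pl x) x \<and> mag pl x \<noteq> x) \<and> le y z \<longrightarrow> le (ml x y) (ml x z)) \<and>
    \<comment> \<open>O5\<close>
    (\<forall>x y z. le (mag pl y) y \<and> le y z \<longrightarrow> le (ml (mag pl x) y) (ml (mag pl x) z)) \<and>
    \<comment> \<open>AM1\<close>
    (\<forall>x y. \<exists>z. ml (mag pl x) y = mag pl z) \<and>
    \<comment> \<open>AM2\<close>
    (\<forall>x y. mag pl (ml x y) = pl (ml (mag pl x) y) (ml (mag pl y) x)) \<and>
    \<comment> \<open>AM3\<close>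
    (\<forall>x. x \<noteq> mag pl x \<longrightarrow> mag pl (sunit ml x) = ml (mag pl x) (sinv pl ml x)) \<and>
    \<comment> \<open>AM4\<close>
    (\<forall>x y z. pl (ml x y) (ml x z) =
       pl (pl (ml x (pl y z)) (ml (mag pl x) y)) (ml (mag pl x) z)) \<and>
    \<comment> \<open>AM5\<close>
    (\<forall>x y. sneg pl (ml x y) = ml (sneg pl x) y) \<and>
    \<comment> \<open>E1\<close>
    (\<exists>!m. \<forall>x. pl m x = x) \<and>
    \<comment> \<open>E2\<close>
    (\<exists>!u. \<forall>x. ml u x = x) \<and>
    \<comment> \<open>E3\<close>
    (\<exists>M. \<forall>x. pl (mag pl x) M = M) \<and>
    \<comment> \<open>E4\<close>
    (\<exists>x. mag pl x \<noteq> szero pl \<and> mag pl x \<noteq> sbig pl) \<and>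
    \<comment> \<open>E5\<close>
    (\<forall>x. \<exists>a. x = pl a (mag pl x) \<and> mag pl a = szero pl) \<and>
    \<comment> \<open>E6\<close>
    (\<forall>x y. x = mag pl x \<longrightarrow> y = mag pl y \<longrightarrow> le x y \<longrightarrow> x \<noteq> y \<longrightarrow>
       (\<exists>z. z \<noteq> mag pl z \<and> le x z \<and> x \<noteq> z \<and> le z y \<and> z \<noteq> y))"

end

theory Submission
  imports Defs
begin

text \<open>Write \<open>E = e(x)\<close>. Every product \<open>E w\<close> is a magnitude; magnitudes are totally
  ordered and their sum is their maximum. Distributivity (AM4) at \<open>E\<close> reads
  \<open>E y + E z = E(y+z) + E y + E z\<close>, so \<open>E(y+z) \<le> max(E y, E z)\<close>. Applied to \<open>z+y\<close> and \<open>-y\<close>,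
  with \<open>E(-y) = E y\<close>, it gives \<open>E(z + e(y)) \<le> max(E(y+z), E y)\<close>, while monotonicity (O5)
  gives \<open>E z \<le> E(z + e(y))\<close>. Hence if \<open>E y < E z\<close>, then \<open>E z \<le> E(y+z) \<le> E z\<close>, so that
  \<open>E(y+z) = E z = E y + E z\<close>.\<close>

locale solid_structure =
  fixes pl :: "'a \<Rightarrow> 'a \<Rightarrow> 'a" (infixl "\<oplus>" 65)
    and ml :: "'a \<Rightarrow> 'a \<Rightarrow> 'a" (infixl "\<otimes>" 70)
    and le :: "'a \<Rightarrow> 'a \<Rightarrow> bool" (infix "\<preceq>" 50)
  assumes solid: "solid pl ml le"
begin

abbreviation e :: "'a \<Rightarrow> 'a" where "e \<equiv> mag pl"
abbreviation neg :: "'a \<Rightarrow> 'a" where "neg \<equiv> sneg pl"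
abbreviation zero :: 'a where "zero \<equiv> szero pl"

lemma add_assoc [rule_format]: "\<forall>x y z. x \<oplus> y \<oplus> z = x \<oplus> (y \<oplus> z)"
  using solid unfolding solid_def by (elim conjE) assumption

lemma add_commute [rule_format]: "\<forall>x y. x \<oplus> y = y \<oplus> x"
  using solid unfolding solid_def by (elim conjE) assumption

lemma add_left_commute: "x \<oplus> (y \<oplus> z) = y \<oplus> (x \<oplus> z)"
  by (metis add_assoc add_commute)

lemma mag_unique [rule_format]: "\<forall>x. \<exists>!e. x \<oplus> e = x \<and> (\<forall>f. x \<oplus> f = x \<longrightarrow> e \<oplus> f = e)"
  using solid unfolding solid_def by (elim conjE) assumption

lemma neg_unique [rule_format]: "\<forall>x. \<exists>!s. x \<oplus> s = e x \<and> e s = e x"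
  using solid unfolding solid_def by (elim conjE) assumption

lemma mag_add_cases [rule_format]: "\<forall>x y. e (x \<oplus> y) = e x \<or> e (x \<oplus> y) = e y"
  using solid unfolding solid_def by (elim conjE) assumption

lemma mult_commute [rule_format]: "\<forall>x y. x \<otimes> y = y \<otimes> x"
  using solid unfolding solid_def by (elim conjE) assumption

lemma le_antisym [rule_format]: "\<forall>x y. x \<preceq> y \<longrightarrow> y \<preceq> x \<longrightarrow> x = y"
  using solid unfolding solid_def by (elim conjE) assumption

lemma le_trans [rule_format]: "\<forall>x y z. x \<preceq> y \<longrightarrow> y \<preceq> z \<longrightarrow> x \<preceq> z"
  using solid unfolding solid_def by (elim conjE) assumption

lemma le_total [rule_format]: "\<forall>x y. x \<preceq> y \<or> y \<preceq> x"
  using solid unfolding solid_def by (elim conjE) assumption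

lemma add_right_mono [rule_format]: "\<forall>x y z. x \<preceq> y \<longrightarrow> x \<oplus> z \<preceq> y \<oplus> z"
  using solid unfolding solid_def by (elim conjE) assumption

lemma absorbed_le_mag [rule_format]:
  "\<forall>x y. y \<oplus> e x = e x \<longrightarrow> y \<preceq> e x \<and> neg y \<preceq> e x"
  using solid unfolding solid_def by (elim conjE) assumption

lemma mag_mult_right_mono [rule_format]:
  "\<forall>x y z. e y \<preceq> y \<and> y \<preceq> z \<longrightarrow> e x \<otimes> y \<preceq> e x \<otimes> z"
  using solid unfolding solid_def by (elim conjE) assumption

lemma mag_mult_is_mag [rule_format]: "\<forall>x y. \<exists>z. e x \<otimes> y = e z"
  using solid unfolding solid_def by (elim conjE) assumption

lemma distrib [rule_format]:
  "\<forall>x y z. x \<otimes> y \<oplus> x \<otimes> z = x \<otimes> (y \<oplus> z) \<oplus> e x \<otimes> y \<oplus> e x \<otimes> z"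
  using solid unfolding solid_def by (elim conjE) assumption

lemma neg_mult [rule_format]: "\<forall>x y. neg (x \<otimes> y) = neg x \<otimes> y"
  using solid unfolding solid_def by (elim conjE) assumption

lemma zero_unique: "\<exists>!m. \<forall>x. m \<oplus> x = x"
  using solid unfolding solid_def by (elim conjE) assumption

lemma zero_add: "zero \<oplus> x = x"
  using theI'[OF zero_unique] unfolding szero_def by blast

lemma add_mag: "x \<oplus> e x = x"
  and mag_absorb: "x \<oplus> f = x \<Longrightarrow> e x \<oplus> f = e x"
  using theI'[OF mag_unique, of x] unfolding mag_def by blast+

lemma mag_eqI: "x \<oplus> m = x \<Longrightarrow> (\<And>f. x \<oplus> f = x \<Longrightarrow> m \<oplus> f = m) \<Longrightarrow> e x = m"
  unfolding mag_def by (rule the1_equality[OF mag_unique]) auto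

lemma mag_mag: "e (e x) = e x"
  by (rule mag_eqI) (auto intro: mag_absorb add_mag)

lemma mag_add_self: "e x \<oplus> e x = e x"
  by (rule mag_absorb[OF add_mag])

lemma add_neg: "x \<oplus> neg x = e x"
  and mag_neg: "e (neg x) = e x"
  using theI'[OF neg_unique, of x] unfolding sneg_def by blast+

lemma neg_eqI: "x \<oplus> s = e x \<Longrightarrow> e s = e x \<Longrightarrow> neg x = s"
  unfolding sneg_def by (rule the1_equality[OF neg_unique]) auto

lemma neg_mag: "neg (e x) = e x"
  by (rule neg_eqI) (simp_all add: mag_mag mag_add_self)

lemma mag_add: "e (x \<oplus> y) = e x \<oplus> e y"
proof -
  have "e (x \<oplus> y) \<oplus> e y = e (x \<oplus> y)"
    by (rule mag_absorb) (metis add_assoc add_mag)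
  moreover have "e (x \<oplus> y) \<oplus> e x = e (x \<oplus> y)"
    by (rule mag_absorb) (metis add_left_commute add_commute add_mag)
  ultimately show ?thesis
    using mag_add_cases[of x y] by (metis add_commute)
qed

lemma neg_add: "neg (x \<oplus> y) = neg x \<oplus> neg y"
proof (rule neg_eqI)
  have "x \<oplus> y \<oplus> (neg x \<oplus> neg y) = (x \<oplus> neg x) \<oplus> (y \<oplus> neg y)"
    by (metis add_assoc add_left_commute)
  then show "x \<oplus> y \<oplus> (neg x \<oplus> neg y) = e (x \<oplus> y)"
    by (simp add: add_neg mag_add)
  show "e (neg x \<oplus> neg y) = e (x \<oplus> y)"
    by (simp add: mag_add mag_neg)
qed

lemma zero_le_mag: "zero \<preceq> e x"
  using absorbed_le_mag zero_add by blast

lemma le_add_mag: "x \<preceq> x \<oplus> e y"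
  using add_right_mono[OF zero_le_mag] by (metis add_commute zero_add)

lemma neg_positive: "\<not> e x \<preceq> x \<Longrightarrow> e (neg x) \<preceq> neg x"
proof -
  assume "\<not> e x \<preceq> x"
  then have "x \<oplus> neg x \<preceq> e x \<oplus> neg x"
    using le_total add_right_mono by blast
  moreover have "e x \<oplus> neg x = neg x"
    by (metis add_commute add_mag mag_neg)
  ultimately show ?thesis
    by (simp add: add_neg mag_neg)
qed

lemma mag_mult_mag: "e (e x \<otimes> y) = e x \<otimes> y"
  using mag_mult_is_mag[of x y] mag_mag by metis

lemma mag_mult_neg: "e x \<otimes> neg y = e x \<otimes> y"
  by (metis mult_commute neg_mult mag_mult_mag neg_mag)

lemma mag_le_iff_add_eq:
  assumes "m = e m" and "n = e n"
  shows "m \<preceq> n \<longleftrightarrow> m \<oplus> n = n"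
proof
  assume "m \<preceq> n"
  have "m \<oplus> n \<preceq> n"
    using add_right_mono[OF \<open>m \<preceq> n\<close>, of n] assms(2) mag_add_self by metis
  moreover have "n \<preceq> m \<oplus> n"
    using add_right_mono[OF zero_le_mag[of m], of n] assms(1) by (simp add: zero_add)
  ultimately show "m \<oplus> n = n"
    by (rule le_antisym)
next
  assume "m \<oplus> n = n"
  then show "m \<preceq> n"
    using absorbed_le_mag assms(2) by metis
qed

lemma mag_add_cases_max:
  assumes "m = e m" and "n = e n"
  shows "m \<oplus> n = m \<or> m \<oplus> n = n"
  using mag_le_iff_add_eq[OF assms] mag_le_iff_add_eq[OF assms(2,1)] le_total
  by (metis add_commute)

lemma mag_mult_add_mag_mono: "e x \<otimes> y \<preceq> e x \<otimes> (y \<oplus> e z)"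
proof (cases "e y \<preceq> y")
  case True
  then show ?thesis
    using mag_mult_right_mono le_add_mag by blast
next
  case False
  have "e x \<otimes> neg y \<preceq> e x \<otimes> (neg y \<oplus> e z)"
    using mag_mult_right_mono neg_positive[OF False] le_add_mag by blast
  moreover have "neg y \<oplus> e z = neg (y \<oplus> e z)"
    by (simp add: neg_add neg_mag)
  ultimately show ?thesis
    by (simp add: mag_mult_neg)
qed

lemma mag_mult_distrib: "e x \<otimes> y \<oplus> e x \<otimes> z = e x \<otimes> (y \<oplus> z) \<oplus> e x \<otimes> y \<oplus> e x \<otimes> z"
  using distrib[of "e x" y z] by (simp add: mag_mag)

lemma mag_mult_distrib_neg:
  "e x \<otimes> (y \<oplus> z) \<oplus> e x \<otimes> z = e x \<otimes> (y \<oplus> e z) \<oplus> e x \<otimes> (y \<oplus> z) \<oplus> e x \<otimes> z"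
proof -
  have "y \<oplus> z \<oplus> neg z = y \<oplus> e z"
    by (simp add: add_assoc add_neg)
  then show ?thesis
    using mag_mult_distrib[of x "y \<oplus> z" "neg z"] by (simp add: mag_mult_neg)
qed

lemma mag_mult_distrib_if_less:
  assumes yz_le: "e x \<otimes> y \<preceq> e x \<otimes> z" and yz_ne: "e x \<otimes> y \<noteq> e x \<otimes> z"
  shows "e x \<otimes> (y \<oplus> z) = e x \<otimes> y \<oplus> e x \<otimes> z"
proof -
  define a b c d where "a = e x \<otimes> y" and "b = e x \<otimes> z"
    and "c = e x \<otimes> (y \<oplus> z)" and "d = e x \<otimes> (z \<oplus> e y)"
  have mags: "a = e a" "b = e b" "c = e c" "d = e d" "c \<oplus> a = e (c \<oplus> a)"
    unfolding a_def b_def c_def d_def by (simp_all add: mag_mult_mag mag_add)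
  have ab: "a \<oplus> b = b"
    using yz_le mag_le_iff_add_eq mags unfolding a_def b_def by blast
  have "c \<preceq> b"
    using mag_mult_distrib[of x y z] ab mag_le_iff_add_eq[of c b] mags
    unfolding a_def b_def c_def by (metis add_assoc)
  have "b \<preceq> c \<oplus> a"
  proof (rule le_trans)
    show "b \<preceq> d"
      unfolding b_def d_def by (rule mag_mult_add_mag_mono)
    show "d \<preceq> c \<oplus> a"
      using mag_mult_distrib_neg[of x z y] mag_le_iff_add_eq[of d "c \<oplus> a"] mags
      unfolding a_def c_def d_def by (metis add_commute add_assoc)
  qed
  moreover have "\<not> b \<preceq> a"
    using yz_le yz_ne le_antisym unfolding a_def b_def by blast
  ultimately have "b \<preceq> c"
    using mag_add_cases_max[of c a] mags by auto
  with \<open>c \<preceq> b\<close> have "c = b"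
    by (rule le_antisym)
  then show ?thesis
    using ab unfolding a_def b_def c_def by simp
qed

lemma mag_mult_distrib_if_ne:
  assumes "e x \<otimes> y \<noteq> e x \<otimes> z"
  shows "e x \<otimes> (y \<oplus> z) = e x \<otimes> y \<oplus> e x \<otimes> z"
  using le_total mag_mult_distrib_if_less assms add_commute by metis

end

theorem mainTheorem5:
  fixes pl ml :: "'a \<Rightarrow> 'a \<Rightarrow> 'a" and le :: "'a \<Rightarrow> 'a \<Rightarrow> bool" and x y z :: 'a
  assumes "solid pl ml le"
    and "ml (mag pl x) (pl y z) \<noteq> pl (ml (mag pl x) y) (ml (mag pl x) z)"
  shows "ml (mag pl x) y = ml (mag pl x) z"
proof -
  interpret solid_structure pl ml le
    by unfold_locales (fact assms(1))
  show ?thesis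
    using mag_mult_distrib_if_ne assms(2) by blast
qed

end
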